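(* Let $n\ge 1$ and let $\mathbb{P}$ be a set of distinct unique configurations of length $n$. Then $K(n)=\Omega(\log|\mathbb{P}|)$; more precisely $K(n)\ge\lceil\log_3|\mathbb{P}|\rceil$.
   Context: For a real sequence $A=(a_1,\dots,a_n)$, a configuration is a sequence $P=(p_1,\dots,p_n)$ with $p_\ell\in\{1,\dots,n-\ell+1\}$ for each $\ell$; $P$ is an output configuration for $A$ if for every $\ell=1,\dots,n$ the sum $a_{p_\ell}+\dots+a_{p_\ell+\ell-1}$ is maximum among all sums of $\ell$ consecutive entries of $A$. Let $\mathcal{P}(A)$ be the set of output configurations of $A$. A configuration $P$ is unique if there exists $A\in\mathbb{R}^n$ with $\mathcal{P}(A)=\{P\}$. The MCSP (in this form) asks, given $A$, to output some output configuration for $A$. A decision tree algorithm for inputs of length $n$ is a ternary tree: each internal node holds a test "$f(A)<0$, $=0$, or $>0$?" for some rational function $f$ of the $n$ inputs, with one branch per outcome; each leaf holds functions $g_1,\dots,g_n$ and outputs $P=(g_1(A),\dots,g_n(A))$. The tree solves MCSP if for every input $A$ the output at the reached leaf is an output configuration for $A$. Its cost is its height, and $K(n)$ is the minimum cost of a decision tree solving MCSP for inputs of length $n$. *)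

theory Defs
  imports Complex_Main
begin

text \<open>Inputs of length n are real lists A of length n; a_i = A ! (i-1).
  Configurations are nat lists P of length n; p_l = P ! (l-1).\<close>

definition window_sum :: "real list \<Rightarrow> nat \<Rightarrow> nat \<Rightarrow> real" where
  "window_sum A l p = (\<Sum>i = p..p + l - 1. A ! (i - 1))"

definition is_config :: "nat \<Rightarrow> nat list \<Rightarrow> bool" where
  "is_config n P \<longleftrightarrow> length P = n \<and>
     (\<forall>l \<in> {1..n}. P ! (l - 1) \<in> {1..n - l + 1})"

definition is_output_config :: "real list \<Rightarrow> nat list \<Rightarrow> bool" where
  "is_output_config A P \<longleftrightarrow> is_config (length A) P \<and>
     (\<forall>l \<in> {1..length A}. \<forall>q \<in> {1..length A - l + 1}.
        window_sum A l q \<le> window_sum A l (P ! (l - 1)))"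

definition output_configs :: "real list \<Rightarrow> nat list set" where
  "output_configs A = {P. is_output_config A P}"

definition unique_config :: "nat \<Rightarrow> nat list \<Rightarrow> bool" where
  "unique_config n P \<longleftrightarrow> is_config n P \<and>
     (\<exists>A. length A = n \<and> output_configs A = {P})"

datatype pexp = PVar nat | PConst real | PAdd pexp pexp | PMul pexp pexp | PNeg pexp

primrec peval :: "real list \<Rightarrow> pexp \<Rightarrow> real" where
  "peval A (PVar i) = A ! (i - 1)"
| "peval A (PConst c) = c"
| "peval A (PAdd p q) = peval A p + peval A q"
| "peval A (PMul p q) = peval A p * peval A q"
| "peval A (PNeg p) = - peval A p"

primrec pvars :: "pexp \<Rightarrow> nat set" where
  "pvars (PVar i) = {i}"
| "pvars (PConst c) = {}"
| "pvars (PAdd p q) = pvars p \<union> pvars q"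
| "pvars (PMul p q) = pvars p \<union> pvars q"
| "pvars (PNeg p) = pvars p"

text \<open>A rational function of n variables: a pair (numerator, denominator) of polynomials
  in x_1..x_n whose denominator is not the zero polynomial.\<close>

type_synonym rfun = "pexp \<times> pexp"

definition is_rfun :: "nat \<Rightarrow> rfun \<Rightarrow> bool" where
  "is_rfun n f \<longleftrightarrow> pvars (fst f) \<subseteq> {1..n} \<and> pvars (snd f) \<subseteq> {1..n} \<and>
     (\<exists>A. length A = n \<and> peval A (snd f) \<noteq> 0)"

definition rfeval :: "real list \<Rightarrow> rfun \<Rightarrow> real" where
  "rfeval A f = peval A (fst f) / peval A (snd f)"

datatype dtree = Leaf "rfun list" | Node rfun dtree dtree dtree

primrec height :: "dtree \<Rightarrow> nat" where
  "height (Leaf gs) = 0"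
| "height (Node f lt eq gt) = 1 + max (height lt) (max (height eq) (height gt))"

primrec wf_dtree :: "nat \<Rightarrow> dtree \<Rightarrow> bool" where
  "wf_dtree n (Leaf gs) \<longleftrightarrow> length gs = n \<and> (\<forall>g \<in> set gs. is_rfun n g)"
| "wf_dtree n (Node f lt eq gt) \<longleftrightarrow> is_rfun n f \<and> wf_dtree n lt \<and> wf_dtree n eq \<and> wf_dtree n gt"

primrec run :: "real list \<Rightarrow> dtree \<Rightarrow> real list" where
  "run A (Leaf gs) = map (rfeval A) gs"
| "run A (Node f lt eq gt) =
     (if rfeval A f < 0 then run A lt else if rfeval A f = 0 then run A eq else run A gt)"

definition solves_MCSP :: "nat \<Rightarrow> dtree \<Rightarrow> bool" where
  "solves_MCSP n T \<longleftrightarrow> wf_dtree n T \<and>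
     (\<forall>A. length A = n \<longrightarrow> (\<exists>P. is_output_config A P \<and> run A T = map real P))"

definition K :: "nat \<Rightarrow> nat" where
  "K n = (LEAST h. \<exists>T. solves_MCSP n T \<and> height T = h)"

end

theory Submission
  imports Defs "HOL-Computational_Algebra.Polynomial"
begin

text \<open>A decision tree of height h has at most 3^h leaves. Each unique configuration P is the
  only output configuration on a whole neighbourhood of some input. Descending the tree from
  such a neighbourhood, each test splits it into three sign regions of a rational function, and
  one of them still contains a neighbourhood, because a nonzero polynomial cannot vanish on an
  open set. So some leaf is reached on an open set on which the tree must output P; there its
  rational functions agree with the constants P, hence agree with them identically. Thus
  distinct unique configurations need distinct leaves.\<close>

text \<open>Real lists carry no topology, so the neighbourhoods of A0 among the lists of the same
  length are given by hand as sup-norm cubes.\<close>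

definition cube :: "real list \<Rightarrow> real \<Rightarrow> real list set" where
  "cube A0 r = {A. length A = length A0 \<and> (\<forall>i<length A0. \<bar>A ! i - A0 ! i\<bar> < r)}"

definition near :: "real list \<Rightarrow> real list filter" where
  "near A0 = (INF r\<in>{0<..}. principal (cube A0 r))"

lemma eventually_near: "eventually P (near A0) \<longleftrightarrow> (\<exists>r>0. \<forall>A\<in>cube A0 r. P A)"
proof -
  have "eventually P (near A0) \<longleftrightarrow> (\<exists>r\<in>{0<..}. eventually P (principal (cube A0 r)))"
    unfolding near_def
  proof (rule eventually_INF_base)
    fix a b :: real assume "a \<in> {0<..}" "b \<in> {0<..}"
    then show "\<exists>r\<in>{0<..}. principal (cube A0 r) \<le> inf (principal (cube A0 a)) (principal (cube A0 b))"
      by (intro bexI[of _ "min a b"]) (auto simp: cube_def)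
  qed auto
  then show ?thesis
    by (auto simp: eventually_principal)
qed

lemma eventually_near_self: "eventually P (near A0) \<Longrightarrow> P A0"
  by (auto simp: eventually_near cube_def)

lemma eventually_near_length: "eventually (\<lambda>A. length A = length A0) (near A0)"
  by (auto simp: eventually_near cube_def intro: exI[of _ 1])

lemma eventually_near_eventually:
  assumes "eventually P (near A0)"
  shows "eventually (\<lambda>A. eventually P (near A)) (near A0)"
proof -
  obtain r where r: "r > 0" "\<forall>A\<in>cube A0 r. P A"
    using assms by (auto simp: eventually_near)
  have "cube A (r/2) \<subseteq> cube A0 r" if A: "A \<in> cube A0 (r/2)" for A
  proof
    fix A' assume A': "A' \<in> cube A (r/2)"
    have "\<bar>A' ! i - A0 ! i\<bar> < r" if "i < length A0" for i
    proof -
      have "\<bar>A' ! i - A ! i\<bar> < r/2" "\<bar>A ! i - A0 ! i\<bar> < r/2"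
        using A A' that by (auto simp: cube_def)
      then show ?thesis by linarith
    qed
    with A A' show "A' \<in> cube A0 r"
      by (simp add: cube_def)
  qed
  with r show ?thesis
    unfolding eventually_near by (intro exI[of _ "r/2"]) (auto intro!: exI[of _ "r/2"])
qed

lemma tendsto_peval_near:
  assumes "pvars e \<subseteq> {1..length A0}"
  shows "((\<lambda>A. peval A e) \<longlongrightarrow> peval A0 e) (near A0)"
  using assms
proof (induction e)
  case (PVar i)
  then have "i - 1 < length A0" by auto
  then show ?case
    by (auto simp: tendsto_iff eventually_near cube_def dist_real_def intro!: exI)
qed (auto intro: tendsto_add tendsto_mult tendsto_minus)

definition line :: "real list \<Rightarrow> real list \<Rightarrow> real \<Rightarrow> real list" where
  "line A0 B t = map2 (\<lambda>a b. a + t * (b - a)) A0 B"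

lemma peval_line_poly:
  assumes "pvars e \<subseteq> {1..length A0}" "length B = length A0"
  shows "\<exists>p. \<forall>t. peval (line A0 B t) e = poly p t"
  using assms(1)
proof (induction e)
  case (PVar i)
  then show ?case
    using assms(2) by (intro exI[of _ "[:A0 ! (i-1), B ! (i-1) - A0 ! (i-1):]"]) (auto simp: line_def)
next
  case (PConst c)
  show ?case by (intro exI[of _ "[:c:]"]) simp
next
  case (PAdd e1 e2)
  then obtain p q where "\<forall>t. peval (line A0 B t) e1 = poly p t" "\<forall>t. peval (line A0 B t) e2 = poly q t"
    by auto
  then show ?case by (intro exI[of _ "p + q"]) simp
next
  case (PMul e1 e2)
  then obtain p q where "\<forall>t. peval (line A0 B t) e1 = poly p t" "\<forall>t. peval (line A0 B t) e2 = poly q t"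
    by auto
  then show ?case by (intro exI[of _ "p * q"]) simp
next
  case (PNeg e)
  then obtain p where "\<forall>t. peval (line A0 B t) e = poly p t"
    by auto
  then show ?case by (intro exI[of _ "- p"]) simp
qed

lemma filterlim_line_near:
  assumes "length B = length A0"
  shows "filterlim (line A0 B) (near A0) (at_right 0)"
  unfolding filterlim_iff eventually_near
proof (intro allI impI, elim exE conjE)
  fix P r assume r: "r > 0" and P: "\<forall>A\<in>cube A0 r. P A"
  have "eventually (\<lambda>t. \<bar>A0 ! i + t * (B ! i - A0 ! i) - A0 ! i\<bar> < r) (at_right 0)" for i
  proof -
    have "((\<lambda>t. A0 ! i + t * (B ! i - A0 ! i)) \<longlongrightarrow> A0 ! i + 0 * (B ! i - A0 ! i)) (at_right 0)"
      by (intro tendsto_intros)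
    from tendstoD[OF this r] show ?thesis
      by (simp add: dist_real_def)
  qed
  then have "eventually (\<lambda>t. \<forall>i\<in>{..<length A0}. \<bar>A0 ! i + t * (B ! i - A0 ! i) - A0 ! i\<bar> < r) (at_right 0)"
    by (intro eventually_ball_finite) auto
  then show "eventually (\<lambda>t. P (line A0 B t)) (at_right 0)"
    by eventually_elim (use P assms in \<open>auto simp: cube_def line_def\<close>)
qed

text \<open>The restriction of e to the line from A0 to B is a univariate polynomial with
  infinitely many roots near 0.\<close>

lemma peval_eq_0_if_eventually_near:
  assumes vars: "pvars e \<subseteq> {1..length A0}"
    and zero: "eventually (\<lambda>A. peval A e = 0) (near A0)"
    and B: "length B = length A0"
  shows "peval B e = 0"
proof -
  obtain p where p: "\<And>t. peval (line A0 B t) e = poly p t"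
    using peval_line_poly[OF vars B] by blast
  have "eventually (\<lambda>t. poly p t = 0) (at_right 0)"
    using filterlim_iff[THEN iffD1, OF filterlim_line_near[OF B], rule_format, OF zero] p by simp
  then obtain b :: real where "b > 0" and "{0<..<b} \<subseteq> {t. poly p t = 0}"
    by (force simp: eventually_at_right_field)
  then have "infinite {t. poly p t = 0}"
    using infinite_Ioo[of 0 b] finite_subset by blast
  then have "p = 0"
    using poly_roots_finite by blast
  moreover have "line A0 B 1 = B"
    using B by (intro nth_equalityI) (auto simp: line_def)
  ultimately show ?thesis
    using p[of 1] by simp
qed

lemma exists_near_nonvanishing:
  assumes vars: "pvars e \<subseteq> {1..length A0}"
    and B: "length B = length A0" "peval B e \<noteq> 0"
    and Q: "eventually Q (near A0)"
  shows "\<exists>A1. length A1 = length A0 \<and> eventually (\<lambda>A. Q A \<and> peval A e \<noteq> 0) (near A1)"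
proof -
  have "eventually (\<lambda>A. eventually Q (near A) \<and> length A = length A0) (near A0)"
    using eventually_near_eventually[OF Q] eventually_near_length by (rule eventually_conj)
  moreover have "\<not> eventually (\<lambda>A. peval A e = 0) (near A0)"
    using peval_eq_0_if_eventually_near[OF vars _ B(1)] B(2) by blast
  ultimately obtain A1 where A1: "eventually Q (near A1)" "length A1 = length A0" "peval A1 e \<noteq> 0"
    using not_eventuallyD[OF not_eventually_impI] by blast
  have "eventually (\<lambda>A. peval A e \<noteq> 0) (near A1)"
    using tendsto_imp_eventually_ne[OF tendsto_peval_near A1(3)] vars A1(2) by simp
  with A1 show ?thesis
    by (auto intro: eventually_conj)
qed

lemma exists_near_sign_cases:
  assumes f: "is_rfun n f" and A0: "length A0 = n" and Q: "eventually Q (near A0)"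
  obtains A1 where "length A1 = n"
    "eventually (\<lambda>A. Q A \<and> rfeval A f < 0) (near A1) \<or>
     eventually (\<lambda>A. Q A \<and> rfeval A f = 0) (near A1) \<or>
     eventually (\<lambda>A. Q A \<and> rfeval A f > 0) (near A1)"
proof -
  obtain p q where pq: "f = (p, q)" by fastforce
  with f A0 have vars: "pvars p \<subseteq> {1..length A0}" "pvars q \<subseteq> {1..length A0}"
    and "\<exists>B. length B = length A0 \<and> peval B q \<noteq> 0"
    by (auto simp: is_rfun_def)
  then obtain A2 where A2: "length A2 = n" "eventually (\<lambda>A. Q A \<and> peval A q \<noteq> 0) (near A2)"
    using exists_near_nonvanishing[OF vars(2) _ _ Q] A0 by blast
  \<comment> \<open>Either p vanishes identically and f = 0 near A2, or p and q are both nonzero near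
    some A3, where f then keeps the sign it has at A3.\<close>
  show ?thesis
  proof (cases "\<exists>B. length B = n \<and> peval B p \<noteq> 0")
    case False
    have "eventually (\<lambda>A. Q A \<and> rfeval A f = 0) (near A2)"
      using A2(2) eventually_near_length[of A2]
      by eventually_elim (use False A2(1) in \<open>auto simp: rfeval_def pq\<close>)
    with A2(1) that show ?thesis by blast
  next
    case True
    then obtain B where "length B = length A2" "peval B p \<noteq> 0"
      using A2(1) by auto
    then obtain A3 where A3: "length A3 = n"
      "eventually (\<lambda>A. (Q A \<and> peval A q \<noteq> 0) \<and> peval A p \<noteq> 0) (near A3)"
      using exists_near_nonvanishing[of p A2 B, OF _ _ _ A2(2)] vars A0 A2(1) by auto
    have lim: "((\<lambda>A. rfeval A f) \<longlongrightarrow> rfeval A3 f) (near A3)"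
      using eventually_near_self[OF A3(2)] vars A0 A3(1)
      by (auto simp: rfeval_def pq intro!: tendsto_divide tendsto_peval_near)
    have "rfeval A3 f \<noteq> 0"
      using eventually_near_self[OF A3(2)] by (simp add: rfeval_def pq)
    then have "eventually (\<lambda>A. rfeval A f < 0) (near A3) \<or> eventually (\<lambda>A. rfeval A f > 0) (near A3)"
      using order_tendstoD[OF lim] by (cases "rfeval A3 f < 0") auto
    then have "eventually (\<lambda>A. Q A \<and> rfeval A f < 0) (near A3) \<or>
      eventually (\<lambda>A. Q A \<and> rfeval A f > 0) (near A3)"
      using eventually_mono[OF A3(2), of Q] by (auto simp: eventually_conj_iff)
    with A3(1) that show ?thesis by blast
  qed
qed

primrec leaves :: "dtree \<Rightarrow> rfun list set" where
  "leaves (Leaf gs) = {gs}"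
| "leaves (Node f lt eq gt) = leaves lt \<union> leaves eq \<union> leaves gt"

lemma card_leaves_le: "finite (leaves T) \<and> card (leaves T) \<le> 3 ^ height T"
proof (induction T)
  case (Node f lt eq gt)
  let ?h = "max (height lt) (max (height eq) (height gt))"
  have "card (leaves lt \<union> leaves eq \<union> leaves gt) \<le> card (leaves lt) + card (leaves eq) + card (leaves gt)"
    by (meson add_le_mono card_Un_le le_trans order_refl)
  also have "\<dots> \<le> 3 ^ ?h + 3 ^ ?h + 3 ^ ?h"
    using Node.IH
    by (intro add_mono) (meson le_trans max.cobounded1 max.cobounded2 one_le_numeral power_increasing)+
  finally show ?case
    using Node.IH by simp
qed simp

lemma wf_dtree_leaves: "wf_dtree n T \<Longrightarrow> gs \<in> leaves T \<Longrightarrow> length gs = n \<and> (\<forall>g\<in>set gs. is_rfun n g)"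
  by (induction T) auto

lemma exists_leaf_near:
  assumes "wf_dtree n T" "length A0 = n" "eventually Q (near A0)"
  shows "\<exists>A1 gs. length A1 = n \<and> gs \<in> leaves T \<and>
           eventually (\<lambda>A. Q A \<and> run A T = map (rfeval A) gs) (near A1)"
  using assms
proof (induction T arbitrary: A0 Q)
  case (Leaf gs)
  then show ?case by auto
next
  case (Node f lt eq gt)
  let ?T = "Node f lt eq gt"
  have branch: "\<exists>A1 gs. length A1 = n \<and> gs \<in> leaves ?T \<and>
      eventually (\<lambda>A. Q A \<and> run A ?T = map (rfeval A) gs) (near A1)"
    if IH: "\<exists>A1 gs. length A1 = n \<and> gs \<in> leaves S \<and>
          eventually (\<lambda>A. (Q A \<and> R A) \<and> run A S = map (rfeval A) gs) (near A1)"
      and sub: "leaves S \<subseteq> leaves ?T" and run_eq: "\<And>A. R A \<Longrightarrow> run A ?T = run A S" for S R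
  proof -
    obtain A2 gs where "length A2 = n" "gs \<in> leaves S"
      and ev: "eventually (\<lambda>A. (Q A \<and> R A) \<and> run A S = map (rfeval A) gs) (near A2)"
      using IH by blast
    moreover have "eventually (\<lambda>A. Q A \<and> run A ?T = map (rfeval A) gs) (near A2)"
      using ev by (rule eventually_mono) (metis run_eq)
    ultimately show ?thesis
      using sub by blast
  qed
  from Node.prems have wf: "is_rfun n f" "wf_dtree n lt" "wf_dtree n eq" "wf_dtree n gt"
    by auto
  obtain A1 where A1: "length A1 = n" and
    "eventually (\<lambda>A. Q A \<and> rfeval A f < 0) (near A1) \<or>
     eventually (\<lambda>A. Q A \<and> rfeval A f = 0) (near A1) \<or>
     eventually (\<lambda>A. Q A \<and> rfeval A f > 0) (near A1)"
    using exists_near_sign_cases[OF wf(1) Node.prems(2,3)] by blast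
  then consider
      (lt) "eventually (\<lambda>A. Q A \<and> rfeval A f < 0) (near A1)"
    | (eq) "eventually (\<lambda>A. Q A \<and> rfeval A f = 0) (near A1)"
    | (gt) "eventually (\<lambda>A. Q A \<and> rfeval A f > 0) (near A1)"
    by blast
  then show ?case
  proof cases
    case lt
    show ?thesis by (rule branch[OF Node.IH(1)[OF wf(2) A1 lt]]) auto
  next
    case eq
    show ?thesis by (rule branch[OF Node.IH(2)[OF wf(3) A1 eq]]) auto
  next
    case gt
    show ?thesis by (rule branch[OF Node.IH(3)[OF wf(4) A1 gt]]) auto
  qed
qed

definition window_pexp :: "nat \<Rightarrow> nat \<Rightarrow> pexp" where
  "window_pexp l p = foldr (\<lambda>i e. PAdd (PVar i) e) [p..<p + l] (PConst 0)"

lemma pvars_window_pexp: "pvars (window_pexp l p) = {p..<p + l}"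
proof -
  have "pvars (foldr (\<lambda>i e. PAdd (PVar i) e) xs (PConst 0)) = set xs" for xs
    by (induction xs) auto
  then show ?thesis
    by (simp add: window_pexp_def)
qed

lemma peval_window_pexp:
  assumes "l \<ge> 1"
  shows "peval A (window_pexp l p) = window_sum A l p"
proof -
  have "peval A (foldr (\<lambda>i e. PAdd (PVar i) e) xs (PConst 0)) = (\<Sum>i\<leftarrow>xs. A ! (i - 1))" for xs
    by (induction xs) auto
  then have "peval A (window_pexp l p) = (\<Sum>i\<in>{p..<p + l}. A ! (i - 1))"
    by (simp add: window_pexp_def interv_sum_list_conv_sum_set_nat)
  also have "{p..<p + l} = {p..p + l - 1}"
    using assms by auto
  finally show ?thesis
    by (simp add: window_sum_def)
qed

lemma window_pexp_vars_subset:
  "l \<in> {1..n} \<Longrightarrow> p \<in> {1..n - l + 1} \<Longrightarrow> pvars (window_pexp l p) \<subseteq> {1..n}"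
  by (auto simp: pvars_window_pexp)

lemma tendsto_window_sum_near:
  assumes "l \<in> {1..length A0}" "p \<in> {1..length A0 - l + 1}"
  shows "((\<lambda>A. window_sum A l p) \<longlongrightarrow> window_sum A0 l p) (near A0)"
  using tendsto_peval_near[OF window_pexp_vars_subset[OF assms]] assms
  by (simp add: peval_window_pexp)

lemma window_sum_less_if_unique_output:
  assumes unique: "output_configs A = {P}"
    and l: "l \<in> {1..length A}" and q: "q \<in> {1..length A - l + 1}" "q \<noteq> P ! (l - 1)"
  shows "window_sum A l q < window_sum A l (P ! (l - 1))"
proof (rule ccontr)
  have P: "is_output_config A P"
    using unique by (auto simp: output_configs_def)
  then have le: "window_sum A l q \<le> window_sum A l (P ! (l - 1))"
    using l q by (auto simp: is_output_config_def)
  assume "\<not> ?thesis"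
  with le have tie: "window_sum A l q = window_sum A l (P ! (l - 1))"
    by simp
  have lenP: "length P = length A"
    using P by (simp add: is_output_config_def is_config_def)
  define P' where "P' = P[l - 1 := q]"
  have P'_nth: "P' ! (l' - 1) = (if l' = l then q else P ! (l' - 1))" if "l' \<in> {1..length A}" for l'
    using that l lenP by (auto simp: P'_def nth_list_update)
  have "is_output_config A P'"
    unfolding is_output_config_def is_config_def
  proof (intro conjI ballI)
    show "length P' = length A"
      using lenP by (simp add: P'_def)
    fix l' assume l': "l' \<in> {1..length A}"
    show "P' ! (l' - 1) \<in> {1..length A - l' + 1}"
      using P'_nth[OF l'] P l' q unfolding is_output_config_def is_config_def by auto
    fix q' assume "q' \<in> {1..length A - l' + 1}"
    then show "window_sum A l' q' \<le> window_sum A l' (P' ! (l' - 1))"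
      using P'_nth[OF l'] P l' tie unfolding is_output_config_def by auto
  qed
  then have "P' = P"
    using unique by (auto simp: output_configs_def)
  with P'_nth[OF l] q(2) show False
    by simp
qed

lemma output_config_eq_if_windows_less:
  assumes P: "is_config (length A) P"
    and less: "\<forall>l\<in>{1..length A}. \<forall>q\<in>{1..length A - l + 1}.
                 q \<noteq> P ! (l - 1) \<longrightarrow> window_sum A l q < window_sum A l (P ! (l - 1))"
    and P': "is_output_config A P'"
  shows "P' = P"
proof (rule nth_equalityI)
  show len: "length P' = length P"
    using P P' by (simp add: is_output_config_def is_config_def)
  fix i assume "i < length P'"
  then have l: "Suc i \<in> {1..length A}"
    using P' by (auto simp: is_output_config_def is_config_def)
  have range: "P' ! i \<in> {1..length A - Suc i + 1}" "P ! i \<in> {1..length A - Suc i + 1}"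
    using P P' l unfolding is_output_config_def is_config_def by (metis diff_Suc_1)+
  then have "window_sum A (Suc i) (P ! i) \<le> window_sum A (Suc i) (P' ! i)"
    using P' l unfolding is_output_config_def by (metis diff_Suc_1)
  with less l range(1) show "P' ! i = P ! i"
    by (metis diff_Suc_1 linorder_not_less)
qed

lemma unique_config_near:
  assumes "unique_config n P"
  obtains A0 where "length A0 = n" "eventually (\<lambda>A. output_configs A \<subseteq> {P}) (near A0)"
proof -
  obtain A0 where A0: "length A0 = n" "output_configs A0 = {P}" and P: "is_config n P"
    using assms by (auto simp: unique_config_def)
  have "eventually (\<lambda>A. window_sum A l q < window_sum A l (P ! (l - 1))) (near A0)"
    if l: "l \<in> {1..n}" and q: "q \<in> {1..n - l + 1}" "q \<noteq> P ! (l - 1)" for l q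
  proof -
    have "P ! (l - 1) \<in> {1..n - l + 1}"
      using P l by (simp add: is_config_def)
    then have "((\<lambda>A. window_sum A l (P ! (l - 1)) - window_sum A l q) \<longlongrightarrow>
        window_sum A0 l (P ! (l - 1)) - window_sum A0 l q) (near A0)"
      using l q A0(1) by (intro tendsto_diff tendsto_window_sum_near) auto
    moreover have "0 < window_sum A0 l (P ! (l - 1)) - window_sum A0 l q"
      using window_sum_less_if_unique_output[OF A0(2)] l q A0(1) by simp
    ultimately have "eventually (\<lambda>A. 0 < window_sum A l (P ! (l - 1)) - window_sum A l q) (near A0)"
      by (rule order_tendstoD(1))
    then show ?thesis
      by (rule eventually_mono) simp
  qed
  then have "eventually (\<lambda>A. \<forall>l\<in>{1..n}. \<forall>q\<in>{1..n - l + 1}.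
      q \<noteq> P ! (l - 1) \<longrightarrow> window_sum A l q < window_sum A l (P ! (l - 1))) (near A0)"
    by (intro eventually_ball_finite ballI) (auto elim: eventually_mono)
  then have "eventually (\<lambda>A. output_configs A \<subseteq> {P}) (near A0)"
    using eventually_near_length[of A0]
    by eventually_elim
      (use P A0(1) output_config_eq_if_windows_less in \<open>auto simp: output_configs_def\<close>)
  with A0(1) that show ?thesis
    by blast
qed

text \<open>The leaf functions g_l = p_l / q_l equal the constants P_l as polynomial identities
  p_l = P_l q_l, so that no input needs to avoid the zeros of q_l.\<close>

definition leaf_computes :: "nat \<Rightarrow> rfun list \<Rightarrow> nat list \<Rightarrow> bool" where
  "leaf_computes n gs P \<longleftrightarrow> (\<forall>l<n. \<forall>B. length B = n \<longrightarrow>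
      peval B (fst (gs ! l)) = real (P ! l) * peval B (snd (gs ! l)))"

lemma leaf_computes_if_eventually_near:
  assumes gs: "length gs = n" "\<forall>g\<in>set gs. is_rfun n g"
    and P: "is_config n P" and A1: "length A1 = n"
    and ev: "eventually (\<lambda>A. map (rfeval A) gs = map real P) (near A1)"
  shows "leaf_computes n gs P"
  unfolding leaf_computes_def
proof (intro allI impI)
  fix l and B :: "real list" assume l: "l < n" and B: "length B = n"
  obtain p q where pq: "gs ! l = (p, q)" by fastforce
  then have "is_rfun n (p, q)"
    using gs l by (metis nth_mem)
  then have vars: "pvars (PAdd p (PNeg (PMul (PConst (real (P ! l))) q))) \<subseteq> {1..length A1}"
    using A1 by (simp add: is_rfun_def)
  have "P ! l \<ge> 1"
    using P l by (auto simp: is_config_def dest: bspec[of _ _ "Suc l"])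
  moreover have "length P = n"
    using P by (simp add: is_config_def)
  ultimately have "eventually (\<lambda>A. peval A p / peval A q = real (P ! l) \<and> real (P ! l) \<noteq> 0) (near A1)"
    using ev l gs(1) by (auto simp: rfeval_def pq dest!: arg_cong[of _ _ "\<lambda>xs. xs ! l"] elim!: eventually_mono)
  then have "eventually (\<lambda>A. peval A (PAdd p (PNeg (PMul (PConst (real (P ! l))) q))) = 0) (near A1)"
    by (rule eventually_mono) (auto simp: divide_eq_eq split: if_splits)
  from peval_eq_0_if_eventually_near[OF vars this] B A1
  show "peval B (fst (gs ! l)) = real (P ! l) * peval B (snd (gs ! l))"
    by (simp add: pq)
qed

lemma leaf_computes_unique:
  assumes "leaf_computes n gs P" "leaf_computes n gs P'" "is_config n P" "is_config n P'"
    and "\<forall>g\<in>set gs. is_rfun n g" "length gs = n"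
  shows "P = P'"
proof (rule nth_equalityI)
  show "length P = length P'"
    using assms by (simp add: is_config_def)
  fix l assume "l < length P"
  then have l: "l < n"
    using assms by (simp add: is_config_def)
  then have "is_rfun n (gs ! l)"
    using assms(5,6) by simp
  then obtain B where B: "length B = n" "peval B (snd (gs ! l)) \<noteq> 0"
    by (auto simp: is_rfun_def)
  then have "real (P ! l) * peval B (snd (gs ! l)) = real (P' ! l) * peval B (snd (gs ! l))"
    using assms(1,2) l unfolding leaf_computes_def by metis
  with B show "P ! l = P' ! l"
    by simp
qed

lemma exists_leaf_computing_unique_config:
  assumes T: "solves_MCSP n T" and P: "unique_config n P"
  shows "\<exists>gs\<in>leaves T. leaf_computes n gs P"
proof -
  have wf: "wf_dtree n T"
    using T by (simp add: solves_MCSP_def)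
  obtain A0 where "length A0 = n" "eventually (\<lambda>A. output_configs A \<subseteq> {P}) (near A0)"
    using unique_config_near[OF P] by blast
  then obtain A1 gs where A1: "length A1 = n" and gs: "gs \<in> leaves T"
    and ev: "eventually (\<lambda>A. output_configs A \<subseteq> {P} \<and> run A T = map (rfeval A) gs) (near A1)"
    using exists_leaf_near[OF wf] by blast
  have "eventually (\<lambda>A. map (rfeval A) gs = map real P) (near A1)"
    using ev eventually_near_length[of A1]
  proof eventually_elim
    case (elim A)
    then obtain P' where "is_output_config A P'" "run A T = map real P'"
      using T A1 by (auto simp: solves_MCSP_def)
    with elim show ?case
      by (auto simp: output_configs_def)
  qed
  moreover have "is_config n P"
    using P by (simp add: unique_config_def)
  ultimately have "leaf_computes n gs P"
    using leaf_computes_if_eventually_near wf_dtree_leaves[OF wf gs] A1 by blast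
  with gs show ?thesis ..
qed

lemma card_unique_configs_le:
  assumes T: "solves_MCSP n T" and PP: "\<forall>P\<in>PP. unique_config n P"
  shows "finite PP \<and> card PP \<le> 3 ^ height T"
proof -
  obtain leaf where leaf: "\<forall>P\<in>PP. leaf P \<in> leaves T \<and> leaf_computes n (leaf P) P"
    using exists_leaf_computing_unique_config[OF T] PP by metis
  have "inj_on leaf PP"
  proof (rule inj_onI)
    fix P P' assume "P \<in> PP" "P' \<in> PP" "leaf P = leaf P'"
    moreover have "wf_dtree n T"
      using T by (simp add: solves_MCSP_def)
    ultimately show "P = P'"
      using leaf PP leaf_computes_unique[of n "leaf P" P P'] wf_dtree_leaves
      by (metis unique_config_def)
  qed
  moreover have "leaf ` PP \<subseteq> leaves T"
    using leaf by auto
  ultimately show ?thesis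
    using card_leaves_le[of T] card_inj_on_le finite_imageD finite_subset le_trans by metis
qed

text \<open>K n is a LEAST over solving trees, so one must exist: test every configuration in
  turn.\<close>

primrec test_nonneg :: "pexp list \<Rightarrow> dtree \<Rightarrow> dtree \<Rightarrow> dtree" where
  "test_nonneg [] S F = S"
| "test_nonneg (c # cs) S F = Node (c, PConst 1) F (test_nonneg cs S F) (test_nonneg cs S F)"

lemma run_test_nonneg:
  "run A (test_nonneg cs S F) = (if \<forall>c\<in>set cs. 0 \<le> peval A c then run A S else run A F)"
  by (induction cs) (auto simp: rfeval_def)

lemma is_rfun_polynomial: "pvars c \<subseteq> {1..n} \<Longrightarrow> is_rfun n (c, PConst 1)"
  unfolding is_rfun_def by (auto intro: exI[of _ "replicate n 0"])

lemma wf_test_nonneg: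
  "\<forall>c\<in>set cs. pvars c \<subseteq> {1..n} \<Longrightarrow> wf_dtree n S \<Longrightarrow> wf_dtree n F \<Longrightarrow> wf_dtree n (test_nonneg cs S F)"
  by (induction cs) (simp_all add: is_rfun_polynomial)

definition window_cmp_pexp :: "nat \<Rightarrow> nat \<Rightarrow> nat \<Rightarrow> pexp" where
  "window_cmp_pexp l p q = PAdd (window_pexp l p) (PNeg (window_pexp l q))"

definition optimality_conds :: "nat \<Rightarrow> nat list \<Rightarrow> pexp list" where
  "optimality_conds n P =
     concat (map (\<lambda>l. map (window_cmp_pexp l (P ! (l - 1))) [1..<n - l + 2]) [1..<n + 1])"

lemma set_optimality_conds:
  "set (optimality_conds n P) = (\<Union>l\<in>{1..n}. window_cmp_pexp l (P ! (l - 1)) ` {1..n - l + 1})"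
proof -
  have "{1..<n - l + 2} = {1..n - l + 1}" "{1..<n + 1} = {1..n}" for l
    by auto
  then show ?thesis
    by (simp only: optimality_conds_def set_concat set_map set_upt image_image)
qed

lemma optimality_conds_iff:
  assumes "is_config n P" "length A = n"
  shows "(\<forall>c\<in>set (optimality_conds n P). 0 \<le> peval A c) \<longleftrightarrow> is_output_config A P"
  using assms
  by (auto simp: set_optimality_conds is_output_config_def window_cmp_pexp_def peval_window_pexp)

lemma optimality_conds_vars:
  assumes "is_config n P" "c \<in> set (optimality_conds n P)"
  shows "pvars c \<subseteq> {1..n}"
proof -
  obtain l q where lq: "l \<in> {1..n}" "q \<in> {1..n - l + 1}" "c = window_cmp_pexp l (P ! (l - 1)) q"
    using assms(2) by (auto simp: set_optimality_conds)
  moreover have "P ! (l - 1) \<in> {1..n - l + 1}"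
    using assms(1) lq(1) by (simp add: is_config_def)
  then have "pvars (window_pexp l (P ! (l - 1))) \<subseteq> {1..n}" "pvars (window_pexp l q) \<subseteq> {1..n}"
    using window_pexp_vars_subset lq(1,2) by blast+
  with lq(3) show ?thesis
    by (simp add: window_cmp_pexp_def)
qed

definition const_leaf :: "nat list \<Rightarrow> dtree" where
  "const_leaf P = Leaf (map (\<lambda>p. (PConst (real p), PConst 1)) P)"

lemma run_const_leaf: "run A (const_leaf P) = map real P"
  by (simp add: const_leaf_def rfeval_def comp_def)

lemma wf_const_leaf: "length P = n \<Longrightarrow> wf_dtree n (const_leaf P)"
  by (auto simp: const_leaf_def intro: is_rfun_polynomial)

primrec first_output_tree :: "nat \<Rightarrow> nat list list \<Rightarrow> dtree" where
  "first_output_tree n [] = const_leaf (replicate n 1)"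
| "first_output_tree n (P # Ps) = test_nonneg (optimality_conds n P) (const_leaf P) (first_output_tree n Ps)"

lemma wf_first_output_tree: "\<forall>P\<in>set Ps. is_config n P \<Longrightarrow> wf_dtree n (first_output_tree n Ps)"
proof (induction Ps)
  case (Cons P Ps)
  then have "is_config n P" "length P = n"
    by (auto simp: is_config_def)
  moreover have "\<forall>c\<in>set (optimality_conds n P). pvars c \<subseteq> {1..n}"
    using optimality_conds_vars[OF \<open>is_config n P\<close>] by blast
  moreover have "wf_dtree n (first_output_tree n Ps)"
    using Cons by simp
  ultimately show ?case
    by (simp only: first_output_tree.simps wf_test_nonneg wf_const_leaf)
qed (simp add: wf_const_leaf)

lemma run_first_output_tree:
  assumes "\<forall>P\<in>set Ps. is_config n P" "length A = n" "\<exists>P\<in>set Ps. is_output_config A P"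
  shows "\<exists>P. is_output_config A P \<and> run A (first_output_tree n Ps) = map real P"
  using assms
proof (induction Ps)
  case (Cons P Ps)
  then show ?case
    using optimality_conds_iff[of n P A] by (auto simp: run_test_nonneg run_const_leaf)
qed simp

lemma exists_output_config: "\<exists>P. is_output_config A P"
proof -
  let ?S = "\<lambda>l. {1..length A - l + 1}"
  have "\<exists>p\<in>?S l. \<forall>q\<in>?S l. window_sum A l q \<le> window_sum A l p" for l
  proof -
    have "Max (window_sum A l ` ?S l) \<in> window_sum A l ` ?S l"
      by (intro Max_in) auto
    then obtain p where "p \<in> ?S l" "window_sum A l p = Max (window_sum A l ` ?S l)"
      by (metis imageE)
    then show ?thesis
      by (intro bexI[of _ p]) auto
  qed
  then obtain best where best: "\<And>l. best l \<in> ?S l \<and> (\<forall>q\<in>?S l. window_sum A l q \<le> window_sum A l (best l))"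
    by metis
  define P where "P = map best [1..<Suc (length A)]"
  have "length P = length A"
    by (simp add: P_def del: upt_Suc)
  moreover have "P ! (l - 1) = best l" if "1 \<le> l" "l \<le> length A" for l
    using that by (simp add: P_def nth_map_upt del: upt_Suc)
  ultimately have "is_output_config A P"
    using best by (simp add: is_output_config_def is_config_def)
  then show ?thesis ..
qed

lemma finite_configs: "finite {P. is_config n P}"
proof (rule finite_subset)
  show "{P. is_config n P} \<subseteq> {xs. set xs \<subseteq> {0..n} \<and> length xs = n}"
  proof safe
    fix P x assume P: "is_config n P" and "x \<in> set P"
    then obtain j where j: "j < length P" "x = P ! j"
      by (auto simp: in_set_conv_nth)
    then have "Suc j \<in> {1..n}"
      using P by (auto simp: is_config_def)
    then have "P ! (Suc j - 1) \<in> {1..n - Suc j + 1}"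
      using P unfolding is_config_def by blast
    with j \<open>Suc j \<in> {1..n}\<close> show "x \<in> {0..n}"
      by auto
  qed (auto simp: is_config_def)
  show "finite {xs. set xs \<subseteq> {0..n} \<and> length xs = n}"
    by (rule finite_lists_length_eq) simp
qed

lemma exists_MCSP_solver: "\<exists>T. solves_MCSP n T"
proof -
  obtain Ps where Ps: "set Ps = {P. is_config n P}"
    using finite_list[OF finite_configs] by blast
  have "solves_MCSP n (first_output_tree n Ps)"
    unfolding solves_MCSP_def
  proof (intro conjI allI impI)
    show "wf_dtree n (first_output_tree n Ps)"
      using Ps by (intro wf_first_output_tree) auto
    fix A :: "real list" assume A: "length A = n"
    obtain P where "is_output_config A P"
      using exists_output_config by blast
    with Ps A have "\<exists>P\<in>set Ps. is_output_config A P"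
      by (auto simp: is_output_config_def)
    with Ps A show "\<exists>P. is_output_config A P \<and> run A (first_output_tree n Ps) = map real P"
      by (intro run_first_output_tree) auto
  qed
  then show ?thesis ..
qed

lemma K_attained: "\<exists>T. solves_MCSP n T \<and> height T = K n"
  unfolding K_def by (rule LeastI_ex) (use exists_MCSP_solver[of n] in blast)

theorem theorem2:
  fixes n :: nat and PP :: "nat list set"
  assumes "n \<ge> 1"
    and "\<forall>P \<in> PP. unique_config n P"
    and "PP \<noteq> {}"
  shows "\<lceil>log 3 (real (card PP))\<rceil> \<le> int (K n)"
proof -
  obtain T where T: "solves_MCSP n T" "height T = K n"
    using K_attained by blast
  with card_unique_configs_le[OF T(1) assms(2)]
  have "finite PP" and card: "card PP \<le> 3 ^ K n"
    by auto
  with assms(3) have "card PP \<ge> 1"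
    by (simp add: Suc_le_eq card_gt_0_iff)
  moreover have "real (card PP) \<le> 3 ^ K n"
    using card by (metis of_nat_le_iff of_nat_numeral of_nat_power)
  ultimately have "log 3 (real (card PP)) \<le> log 3 (3 ^ K n)"
    by (intro log_mono) auto
  then show ?thesis
    by (simp add: log_nat_power ceiling_le_iff)
qed

end
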